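(* Let $n\ge3$, $m_1,\dots,m_n>0$, and let the configuration $\theta_i=\pi/2$, $\varphi_i=\varphi_i^0$ ($i=1,\dots,n$) on the equator be a fixed point. Let $\omega\in\mathbb R$, let $X_\omega$ be the point $\theta_i=\pi/2$, $\varphi_i=\varphi_i^0$, $p_{\theta_i}=0$, $p_{\varphi_i}=\omega m_i$, and let $L$ be the Jacobian matrix at $X_\omega$ of the vector field of the rotating system below, with variables ordered as $(\theta_1,\dots,\theta_n,\varphi_1,\dots,\varphi_n,p_{\theta_1},\dots,p_{\theta_n},p_{\varphi_1},\dots,p_{\varphi_n})$. Then $$L=\begin{bmatrix}0&0&M^{-1}&0\\0&0&0&M^{-1}\\H_\omega&0&0&0\\0&G&0&0\end{bmatrix},$$ where $M=\mathrm{diag}(m_1,\dots,m_n)$, $H_\omega=H-\omega^2M$, $H=\big[\frac{\partial^2V}{\partial\theta_i\partial\theta_j}\big]$ and $G=\big[\frac{\partial^2V}{\partial\varphi_i\partial\varphi_j}\big]$ evaluated at the configuration, and these have entries $$H_{ij}=\frac{m_im_j}{\sin^3d_{ij}},\quad H_{ii}=-\sum_{j\neq i}H_{ij}\cos d_{ij},\quad G_{ij}=\frac{-2m_im_j\cos d_{ij}}{\sin^3 d_{ij}},\quad G_{ii}=-\sum_{j\neq i}G_{ij}\qquad(i\neq j).$$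
   Context: Positions on the unit sphere: $\mathbf q_i=(\sin\theta_i\cos\varphi_i,\sin\theta_i\sin\varphi_i,\cos\theta_i)$; $d_{ij}=\arccos(\mathbf q_i\cdot\mathbf q_j)$; the force function is $V=\sum_{i<j}m_im_j\cot d_{ij}$ on $W=\{d_{ij}\notin\{0,\pi\},\ i\ne j\}\subset(\mathbb S^2)^n$, and $U=-V$. A fixed point is a critical point of $V$ on $W$. The rotating system (the $n$-body problem on $\mathbb S^2$ written in coordinates rotating about the $z$-axis with angular velocity $\omega$) is: for $i=1,\dots,n$, $\dot\theta_i=\frac{p_{\theta_i}}{m_i}$, $\dot\varphi_i=\frac{p_{\varphi_i}}{m_i\sin^2\theta_i}-\omega$, $\dot p_{\theta_i}=\frac{p_{\varphi_i}^2\cos\theta_i}{m_i\sin^3\theta_i}-\frac{\partial U}{\partial\theta_i}$, $\dot p_{\varphi_i}=-\frac{\partial U}{\partial\varphi_i}$. The point $X_\omega$ is a rest point of this system (it corresponds to the relative equilibrium obtained by rotating the fixed point uniformly with angular velocity $\omega$). *)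

theory Defs
  imports "HOL-Analysis.Analysis"
begin

text \<open>State vectors are functions nat => real; for n bodies the coordinates are
  theta_i = x i, phi_i = x (n+i), p_theta_i = x (2n+i), p_phi_i = x (3n+i), i < n.\<close>

definition sph_pos :: "real \<Rightarrow> real \<Rightarrow> real \<times> real \<times> real" where
  "sph_pos th ph = (sin th * cos ph, sin th * sin ph, cos th)"

definition dot3 :: "real \<times> real \<times> real \<Rightarrow> real \<times> real \<times> real \<Rightarrow> real" where
  "dot3 u v = fst u * fst v + fst (snd u) * fst (snd v) + snd (snd u) * snd (snd v)"

definition qpos :: "nat \<Rightarrow> (nat \<Rightarrow> real) \<Rightarrow> nat \<Rightarrow> real \<times> real \<times> real" where
  "qpos n x i = sph_pos (x i) (x (n + i))"

definition sdist :: "nat \<Rightarrow> (nat \<Rightarrow> real) \<Rightarrow> nat \<Rightarrow> nat \<Rightarrow> real" where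
  "sdist n x i j = arccos (dot3 (qpos n x i) (qpos n x j))"

definition Vpot :: "nat \<Rightarrow> (nat \<Rightarrow> real) \<Rightarrow> (nat \<Rightarrow> real) \<Rightarrow> real" where
  "Vpot n m x = (\<Sum>(i,j)\<in>{(i,j). i < j \<and> j < n}. m i * m j * cot (sdist n x i j))"

definition Upot :: "nat \<Rightarrow> (nat \<Rightarrow> real) \<Rightarrow> (nat \<Rightarrow> real) \<Rightarrow> real" where
  "Upot n m x = - Vpot n m x"

definition partial :: "((nat \<Rightarrow> real) \<Rightarrow> real) \<Rightarrow> nat \<Rightarrow> (nat \<Rightarrow> real) \<Rightarrow> real" where
  "partial f k x = deriv (\<lambda>t. f (x(k := t))) (x k)"

definition in_W :: "nat \<Rightarrow> (nat \<Rightarrow> real) \<Rightarrow> bool" where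
  "in_W n x \<longleftrightarrow> (\<forall>i<n. \<forall>j<n. i \<noteq> j \<longrightarrow> sdist n x i j \<noteq> 0 \<and> sdist n x i j \<noteq> pi)"

definition fixed_point :: "nat \<Rightarrow> (nat \<Rightarrow> real) \<Rightarrow> (nat \<Rightarrow> real) \<Rightarrow> bool" where
  "fixed_point n m x \<longleftrightarrow> in_W n x \<and>
     (\<forall>k<2*n. ((\<lambda>t. Vpot n m (x(k := t))) has_real_derivative 0) (at (x k)))"

definition config :: "nat \<Rightarrow> (nat \<Rightarrow> real) \<Rightarrow> nat \<Rightarrow> real" where
  "config n phi0 k = (if k < n then pi / 2 else phi0 (k - n))"

definition Xomega :: "nat \<Rightarrow> (nat \<Rightarrow> real) \<Rightarrow> (nat \<Rightarrow> real) \<Rightarrow> real \<Rightarrow> nat \<Rightarrow> real" where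
  "Xomega n m phi0 \<omega> k =
     (if k < n then pi / 2
      else if k < 2*n then phi0 (k - n)
      else if k < 3*n then 0
      else if k < 4*n then \<omega> * m (k - 3*n)
      else 0)"

definition rot_field :: "nat \<Rightarrow> (nat \<Rightarrow> real) \<Rightarrow> real \<Rightarrow> (nat \<Rightarrow> real) \<Rightarrow> nat \<Rightarrow> real" where
  "rot_field n m \<omega> x a =
     (if a < n then x (2*n + a) / m a
      else if a < 2*n then x (3*n + (a - n)) / (m (a - n) * sin (x (a - n)) ^ 2) - \<omega>
      else if a < 3*n then
        x (3*n + (a - 2*n)) ^ 2 * cos (x (a - 2*n)) / (m (a - 2*n) * sin (x (a - 2*n)) ^ 3)
          - partial (Upot n m) (a - 2*n) x
      else if a < 4*n then - partial (Upot n m) (n + (a - 3*n)) x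
      else 0)"

definition Hmat :: "nat \<Rightarrow> (nat \<Rightarrow> real) \<Rightarrow> (nat \<Rightarrow> real) \<Rightarrow> nat \<Rightarrow> nat \<Rightarrow> real" where
  "Hmat n m phi0 i j = partial (partial (Vpot n m) j) i (config n phi0)"

definition Gmat :: "nat \<Rightarrow> (nat \<Rightarrow> real) \<Rightarrow> (nat \<Rightarrow> real) \<Rightarrow> nat \<Rightarrow> nat \<Rightarrow> real" where
  "Gmat n m phi0 i j = partial (partial (Vpot n m) (n + j)) (n + i) (config n phi0)"

definition Lblock :: "nat \<Rightarrow> (nat \<Rightarrow> real) \<Rightarrow> (nat \<Rightarrow> real) \<Rightarrow> real \<Rightarrow> nat \<Rightarrow> nat \<Rightarrow> real" where
  "Lblock n m phi0 \<omega> a b =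
     (if a < n then (if b = 2*n + a then 1 / m a else 0)
      else if a < 2*n then (if b = 3*n + (a - n) then 1 / m (a - n) else 0)
      else if a < 3*n then
        (if b < n then Hmat n m phi0 (a - 2*n) b - (if b = a - 2*n then \<omega>^2 * m b else 0) else 0)
      else (if n \<le> b \<and> b < 2*n then Gmat n m phi0 (a - 3*n) (b - n) else 0))"

end

theory Submission
  imports Defs
begin

text \<open>Write \<open>c\<^sub>i\<^sub>j = cos d\<^sub>i\<^sub>j\<close>, a trigonometric polynomial in the coordinates; then
  \<open>V = \<Sum>\<^sub>i\<^sub><\<^sub>j m\<^sub>i m\<^sub>j f(c\<^sub>i\<^sub>j)\<close> with \<open>f(c) = cot (arccos c) = c / sqrt(1 - c\<^sup>2)\<close>, whose derivatives are
  \<open>f' = (1 - c\<^sup>2)\<^sup>-\<^sup>3\<^sup>/\<^sup>2\<close> and \<open>f'' = 3c (1 - c\<^sup>2)\<^sup>-\<^sup>5\<^sup>/\<^sup>2\<close>. By the chain rule the Hessian of \<open>V\<close> is a sum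
  of terms \<open>m\<^sub>i m\<^sub>j (f'' \<nabla>c\<^sub>i\<^sub>j \<nabla>c\<^sub>i\<^sub>j\<^sup>T + f' \<nabla>\<^sup>2c\<^sub>i\<^sub>j)\<close>. On the equator all first \<open>\<theta>\<close>-derivatives of
  \<open>c\<^sub>i\<^sub>j\<close> and all mixed \<open>\<theta>\<phi>\<close>-derivatives vanish, which makes the Hessian block diagonal, and the
  remaining derivatives are read off from \<open>c\<^sub>i\<^sub>j = cos (\<phi>\<^sub>i - \<phi>\<^sub>j)\<close>; in the \<open>\<phi>\<close>-block the identity
  \<open>f''(c) (1 - c\<^sup>2) = 3 c f'(c)\<close> produces the factor \<open>-2 cos d\<^sub>i\<^sub>j\<close>. The rows of the Jacobian of the
  rotating vector field coming from the kinetic terms are computed directly at \<open>X\<^sub>\<omega>\<close>, where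
  \<open>sin \<theta>\<^sub>i = 1\<close> and \<open>cos \<theta>\<^sub>i = 0\<close>; the term \<open>p\<^sub>\<phi>\<^sup>2 cos \<theta> / (m sin\<^sup>3 \<theta>)\<close> contributes \<open>-\<omega>\<^sup>2 m\<^sub>i\<close>.\<close>

section \<open>The cosine of the angular distance\<close>

definition sphcos :: "real \<Rightarrow> real \<Rightarrow> real \<Rightarrow> real \<Rightarrow> real" where
  "sphcos a b p q = sin a * sin b * (cos p * cos q + sin p * sin q) + cos a * cos b"

definition sphcos_da :: "real \<Rightarrow> real \<Rightarrow> real \<Rightarrow> real \<Rightarrow> real" where
  "sphcos_da a b p q = cos a * sin b * (cos p * cos q + sin p * sin q) - sin a * cos b"

definition sphcos_db :: "real \<Rightarrow> real \<Rightarrow> real \<Rightarrow> real \<Rightarrow> real" where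
  "sphcos_db a b p q = sin a * cos b * (cos p * cos q + sin p * sin q) - cos a * sin b"

definition sphcos_dp :: "real \<Rightarrow> real \<Rightarrow> real \<Rightarrow> real \<Rightarrow> real" where
  "sphcos_dp a b p q = sin a * sin b * (- sin p * cos q + cos p * sin q)"

definition sphcos_dq :: "real \<Rightarrow> real \<Rightarrow> real \<Rightarrow> real \<Rightarrow> real" where
  "sphcos_dq a b p q = sin a * sin b * (- cos p * sin q + sin p * cos q)"

lemma DERIV_sphcos:
  assumes "(fa has_real_derivative da) (at t)" "(fb has_real_derivative db) (at t)"
    "(fp has_real_derivative dp) (at t)" "(fq has_real_derivative dq) (at t)"
  shows "((\<lambda>t. sphcos (fa t) (fb t) (fp t) (fq t)) has_real_derivative
     sphcos_da (fa t) (fb t) (fp t) (fq t) * da + sphcos_db (fa t) (fb t) (fp t) (fq t) * db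
     + sphcos_dp (fa t) (fb t) (fp t) (fq t) * dp + sphcos_dq (fa t) (fb t) (fp t) (fq t) * dq) (at t)"
  unfolding sphcos_def sphcos_da_def sphcos_db_def sphcos_dp_def sphcos_dq_def
  by (rule derivative_eq_intros assms refl)+ (simp add: algebra_simps)

context
  fixes fa fb fp fq :: "real \<Rightarrow> real" and da db dp dq t :: real
  assumes derivs: "(fa has_real_derivative da) (at t)" "(fb has_real_derivative db) (at t)"
    "(fp has_real_derivative dp) (at t)" "(fq has_real_derivative dq) (at t)"
    and equator: "fa t = pi/2" "fb t = pi/2"
begin

lemma DERIV_sphcos_da_equator:
  "((\<lambda>t. sphcos_da (fa t) (fb t) (fp t) (fq t)) has_real_derivative
     - sphcos (fa t) (fb t) (fp t) (fq t) * da + db) (at t)"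
  unfolding sphcos_def sphcos_da_def
  by (rule derivative_eq_intros derivs refl)+ (simp add: equator algebra_simps)

lemma DERIV_sphcos_db_equator:
  "((\<lambda>t. sphcos_db (fa t) (fb t) (fp t) (fq t)) has_real_derivative
     da - sphcos (fa t) (fb t) (fp t) (fq t) * db) (at t)"
  unfolding sphcos_def sphcos_db_def
  by (rule derivative_eq_intros derivs refl)+ (simp add: equator algebra_simps)

lemma DERIV_sphcos_dp_equator:
  "((\<lambda>t. sphcos_dp (fa t) (fb t) (fp t) (fq t)) has_real_derivative
     - sphcos (fa t) (fb t) (fp t) (fq t) * dp + sphcos (fa t) (fb t) (fp t) (fq t) * dq) (at t)"
  unfolding sphcos_def sphcos_dp_def
  by (rule derivative_eq_intros derivs refl)+ (simp add: equator algebra_simps)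

lemma DERIV_sphcos_dq_equator:
  "((\<lambda>t. sphcos_dq (fa t) (fb t) (fp t) (fq t)) has_real_derivative
     sphcos (fa t) (fb t) (fp t) (fq t) * dp - sphcos (fa t) (fb t) (fp t) (fq t) * dq) (at t)"
  unfolding sphcos_def sphcos_dq_def
  by (rule derivative_eq_intros derivs refl)+ (simp add: equator algebra_simps)

end

lemma abs_sphcos_le_1: "\<bar>sphcos a b p q\<bar> \<le> 1"
proof -
  have "\<bar>cos p * cos q + sin p * sin q\<bar> \<le> 1"
    using cos_diff[of p q] by (metis abs_cos_le_one)
  have "\<bar>sphcos a b p q\<bar> \<le> \<bar>sin a * sin b\<bar> * \<bar>cos p * cos q + sin p * sin q\<bar> + \<bar>cos a * cos b\<bar>"
    unfolding sphcos_def by (metis abs_mult abs_triangle_ineq)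
  also have "\<dots> \<le> \<bar>sin a * sin b\<bar> + \<bar>cos a * cos b\<bar>"
    using \<open>\<bar>cos p * cos q + sin p * sin q\<bar> \<le> 1\<close> by (simp add: mult_left_le)
  also have "\<dots> \<le> 1"
  proof -
    have "2 * \<bar>sin a\<bar> * \<bar>sin b\<bar> \<le> (sin a)\<^sup>2 + (sin b)\<^sup>2"
      "2 * \<bar>cos a\<bar> * \<bar>cos b\<bar> \<le> (cos a)\<^sup>2 + (cos b)\<^sup>2"
      using sum_squares_bound[of "\<bar>sin a\<bar>" "\<bar>sin b\<bar>"] sum_squares_bound[of "\<bar>cos a\<bar>" "\<bar>cos b\<bar>"]
      by simp_all
    then show ?thesis using sin_cos_squared_add[of a] sin_cos_squared_add[of b]
      unfolding abs_mult by linarith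
  qed
  finally show ?thesis .
qed

section \<open>The potential as a sum over pairs\<close>

definition pairs :: "nat \<Rightarrow> (nat \<times> nat) set" where
  "pairs n = {(i, j). i < j \<and> j < n}"

lemma finite_pairs: "finite (pairs n)"
  by (rule finite_subset[of _ "{..<n} \<times> {..<n}"]) (auto simp: pairs_def)

lemma sum_pairs: "(\<Sum>(i, j)\<in>pairs n. f i j) = (\<Sum>i<n. \<Sum>j\<in>{i<..<n}. f i j)"
proof -
  have "pairs n = Sigma {..<n} (\<lambda>i. {i<..<n})" unfolding pairs_def by auto
  then show ?thesis by (simp add: sum.Sigma)
qed

definition pair_cos :: "nat \<Rightarrow> (nat \<Rightarrow> real) \<Rightarrow> nat \<Rightarrow> nat \<Rightarrow> real" where
  "pair_cos n y i j = sphcos (y i) (y j) (y (n + i)) (y (n + j))"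

lemma dot3_qpos: "dot3 (qpos n y i) (qpos n y j) = pair_cos n y i j"
  unfolding dot3_def qpos_def sph_pos_def pair_cos_def sphcos_def by (simp add: algebra_simps)

lemma abs_pair_cos_le_1: "\<bar>pair_cos n y i j\<bar> \<le> 1"
  unfolding pair_cos_def by (rule abs_sphcos_le_1)

lemma pair_cos_commute: "pair_cos n y i j = pair_cos n y j i"
  unfolding pair_cos_def sphcos_def by (simp add: algebra_simps)

lemma sin_cos_sdist:
  "sin (sdist n x i j) = sqrt (1 - pair_cos n x i j ^ 2)"
  "cos (sdist n x i j) = pair_cos n x i j"
  unfolding sdist_def dot3_qpos using abs_pair_cos_le_1[of n x i j]
  by (auto simp: sin_arccos_abs cos_arccos_abs)

definition in_W_cos :: "nat \<Rightarrow> (nat \<Rightarrow> real) \<Rightarrow> bool" where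
  "in_W_cos n x \<longleftrightarrow> (\<forall>(i, j)\<in>pairs n. \<bar>pair_cos n x i j\<bar> < 1)"

lemma in_W_imp_in_W_cos:
  assumes "in_W n x"
  shows "in_W_cos n x"
  unfolding in_W_cos_def
proof clarify
  fix i j assume "(i, j) \<in> pairs n"
  then have "i < n" "j < n" "i \<noteq> j" by (auto simp: pairs_def)
  with assms have "arccos (pair_cos n x i j) \<noteq> 0" "arccos (pair_cos n x i j) \<noteq> pi"
    unfolding in_W_def sdist_def dot3_qpos by auto
  then have "pair_cos n x i j \<noteq> 1" "pair_cos n x i j \<noteq> -1" by auto
  then show "\<bar>pair_cos n x i j\<bar> < 1" using abs_pair_cos_le_1[of n x i j] by auto
qed

definition cotarc :: "real \<Rightarrow> real" where
  "cotarc c = c / sqrt (1 - c\<^sup>2)"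

definition cotarc' :: "real \<Rightarrow> real" where
  "cotarc' c = 1 / sqrt (1 - c\<^sup>2) ^ 3"

definition cotarc'' :: "real \<Rightarrow> real" where
  "cotarc'' c = 3 * c / sqrt (1 - c\<^sup>2) ^ 5"

lemma cot_arccos: "\<bar>c\<bar> \<le> 1 \<Longrightarrow> cot (arccos c) = cotarc c"
  unfolding cot_def cotarc_def by (simp add: cos_arccos_abs sin_arccos_abs)

lemma Vpot_eq_sum_pairs: "Vpot n m y = (\<Sum>(i, j)\<in>pairs n. m i * m j * cotarc (pair_cos n y i j))"
  unfolding Vpot_def pairs_def sdist_def dot3_qpos
  by (rule sum.cong) (auto simp: cot_arccos abs_pair_cos_le_1)

lemma DERIV_sqrt_one_minus_square:
  assumes "\<bar>c\<bar> < 1"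
  shows "((\<lambda>c. sqrt (1 - c\<^sup>2)) has_real_derivative - c / sqrt (1 - c\<^sup>2)) (at c)"
proof -
  have "0 < 1 - c\<^sup>2" using assms by (simp add: abs_square_less_1)
  then show ?thesis
    by (auto intro!: derivative_eq_intros simp: field_simps)
qed

lemma DERIV_cotarc:
  assumes c: "\<bar>c\<bar> < 1"
  shows "(cotarc has_real_derivative cotarc' c) (at c)"
proof -
  define S where "S = sqrt (1 - c\<^sup>2)"
  have "0 < 1 - c\<^sup>2" using c by (simp add: abs_square_less_1)
  then have S: "S\<^sup>2 = 1 - c\<^sup>2" "S > 0" by (auto simp: S_def)
  have "((\<lambda>c. c / sqrt (1 - c\<^sup>2)) has_real_derivative (S - (- c / S * c)) / S\<^sup>2) (at c)"
    using DERIV_quotient[OF DERIV_ident DERIV_sqrt_one_minus_square[OF c]] S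
    unfolding S_def by (simp add: power2_eq_square)
  moreover have "(S - (- c / S * c)) / S\<^sup>2 = cotarc' c"
    unfolding cotarc'_def S_def[symmetric] using S
    by (simp add: field_simps power3_eq_cube power2_eq_square)
  ultimately show ?thesis unfolding cotarc_def[abs_def] by simp
qed

lemma DERIV_cotarc':
  assumes c: "\<bar>c\<bar> < 1"
  shows "(cotarc' has_real_derivative cotarc'' c) (at c)"
proof -
  define S where "S = sqrt (1 - c\<^sup>2)"
  have "0 < 1 - c\<^sup>2" using c by (simp add: abs_square_less_1)
  then have S: "S\<^sup>2 = 1 - c\<^sup>2" "S > 0" by (auto simp: S_def)
  have "((\<lambda>c. sqrt (1 - c\<^sup>2) ^ 3) has_real_derivative 3 * (- c / S * S\<^sup>2)) (at c)"
    using DERIV_power[OF DERIV_sqrt_one_minus_square[OF c], of 3] unfolding S_def by simp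
  from DERIV_quotient[OF DERIV_const[where k=1] this] S
  have "((\<lambda>c. 1 / sqrt (1 - c\<^sup>2) ^ 3) has_real_derivative
      - (3 * (- c / S * S\<^sup>2)) / (S ^ 3)\<^sup>2) (at c)"
    unfolding S_def by simp
  moreover have "- (3 * (- c / S * S\<^sup>2)) / (S ^ 3)\<^sup>2 = cotarc'' c"
    unfolding cotarc''_def S_def[symmetric] using S
    by (simp add: field_simps eval_nat_numeral)
  ultimately show ?thesis unfolding cotarc'_def[abs_def] by simp
qed

lemma cotarc''_mult_one_minus_square:
  assumes c: "\<bar>c\<bar> < 1"
  shows "cotarc'' c * (1 - c\<^sup>2) = 3 * c * cotarc' c"
proof -
  define S where "S = sqrt (1 - c\<^sup>2)"
  have "0 < 1 - c\<^sup>2" using c by (simp add: abs_square_less_1)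
  then have S: "1 - c\<^sup>2 = S\<^sup>2" "S > 0" by (auto simp: S_def)
  show ?thesis unfolding cotarc''_def cotarc'_def S_def[symmetric] S(1) using S(2)
    by (simp add: field_simps eval_nat_numeral)
qed

lemma DERIV_fun_upd: "((\<lambda>t. (y(k := t)) i) has_real_derivative of_bool (i = k)) (at t)"
  by (cases "i = k") auto

definition pair_cos_grad :: "nat \<Rightarrow> (nat \<Rightarrow> real) \<Rightarrow> nat \<Rightarrow> nat \<Rightarrow> nat \<Rightarrow> real" where
  "pair_cos_grad n y i j k =
       sphcos_da (y i) (y j) (y (n + i)) (y (n + j)) * of_bool (i = k)
     + sphcos_db (y i) (y j) (y (n + i)) (y (n + j)) * of_bool (j = k)
     + sphcos_dp (y i) (y j) (y (n + i)) (y (n + j)) * of_bool (n + i = k)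
     + sphcos_dq (y i) (y j) (y (n + i)) (y (n + j)) * of_bool (n + j = k)"

lemma DERIV_pair_cos:
  "((\<lambda>t. pair_cos n (y(k := t)) i j) has_real_derivative pair_cos_grad n (y(k := t)) i j k) (at t)"
  unfolding pair_cos_def pair_cos_grad_def
  by (rule DERIV_sphcos[OF DERIV_fun_upd DERIV_fun_upd DERIV_fun_upd DERIV_fun_upd])

lemma DERIV_Vpot:
  assumes "in_W_cos n y"
  shows "((\<lambda>t. Vpot n m (y(k := t))) has_real_derivative
     (\<Sum>(i, j)\<in>pairs n. m i * m j * (cotarc' (pair_cos n y i j) * pair_cos_grad n y i j k))) (at (y k))"
  unfolding Vpot_eq_sum_pairs split_beta
proof (rule DERIV_sum)
  fix p assume "p \<in> pairs n"
  with assms have c: "\<bar>pair_cos n y (fst p) (snd p)\<bar> < 1" by (auto simp: in_W_cos_def)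
  have "(cotarc has_real_derivative cotarc' (pair_cos n y (fst p) (snd p)))
      (at (pair_cos n (y(k := y k)) (fst p) (snd p)))"
    using DERIV_cotarc[OF c] by simp
  from DERIV_chain2[OF this DERIV_pair_cos[where t = "y k"]]
  show "((\<lambda>t. m (fst p) * m (snd p) * cotarc (pair_cos n (y(k := t)) (fst p) (snd p)))
      has_real_derivative m (fst p) * m (snd p) *
        (cotarc' (pair_cos n y (fst p) (snd p)) * pair_cos_grad n y (fst p) (snd p) k)) (at (y k))"
    by (intro DERIV_cmult) simp
qed

lemma partial_Vpot:
  assumes "in_W_cos n y"
  shows "partial (Vpot n m) k y
    = (\<Sum>(i, j)\<in>pairs n. m i * m j * (cotarc' (pair_cos n y i j) * pair_cos_grad n y i j k))"
  unfolding partial_def by (rule DERIV_imp_deriv[OF DERIV_Vpot[OF assms]])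

lemma partial_Upot:
  assumes "in_W_cos n y"
  shows "partial (Upot n m) k y = - partial (Vpot n m) k y"
  using DERIV_imp_deriv[OF DERIV_minus[OF DERIV_Vpot[OF assms]]] partial_Vpot[OF assms]
  unfolding partial_def Upot_def by simp

lemma eventually_in_W_cos_upd:
  assumes "in_W_cos n x"
  shows "eventually (\<lambda>t. in_W_cos n (x(b := t))) (nhds (x b))"
  unfolding in_W_cos_def
proof (intro eventually_ball_finite finite_pairs ballI, clarify)
  fix i j assume "(i, j) \<in> pairs n"
  let ?g = "\<lambda>t. pair_cos n (x(b := t)) i j"
  have "continuous_on UNIV ?g"
    by (rule continuous_at_imp_continuous_on) (auto intro: DERIV_isCont[OF DERIV_pair_cos])
  then have "open {t. -1 < ?g t \<and> ?g t < 1}"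
    by (intro open_Collect_conj open_Collect_less continuous_on_const)
  moreover have "x b \<in> {t. -1 < ?g t \<and> ?g t < 1}"
    using assms \<open>(i, j) \<in> pairs n\<close> by (auto simp: in_W_cos_def abs_less_iff)
  ultimately have "eventually (\<lambda>t. t \<in> {t. -1 < ?g t \<and> ?g t < 1}) (nhds (x b))"
    by (rule eventually_nhds_in_open)
  then show "eventually (\<lambda>t. \<bar>?g t\<bar> < 1) (nhds (x b))"
    by eventually_elim (simp add: abs_less_iff)
qed

lemma sum_pairs_select:
  assumes "k < n" "l < n" "k \<noteq> l" "\<And>i j. g i j = g j i"
  shows "(\<Sum>(i, j)\<in>pairs n. g i j * (of_bool (i = k) * of_bool (j = l) + of_bool (j = k) * of_bool (i = l)))
    = (g k l :: real)"
proof -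
  have "(\<Sum>(i, j)\<in>pairs n. g i j * (of_bool (i = k) * of_bool (j = l) + of_bool (j = k) * of_bool (i = l)))
      = (\<Sum>p\<in>pairs n. if p = (min k l, max k l) then g k l else 0)"
  proof (rule sum.cong[OF refl])
    fix p assume "p \<in> pairs n"
    then obtain i j where "p = (i, j)" "i < j" by (auto simp: pairs_def)
    then show "(case p of (i, j) \<Rightarrow> g i j * (of_bool (i = k) * of_bool (j = l) + of_bool (j = k) * of_bool (i = l)))
      = (if p = (min k l, max k l) then g k l else 0)"
      using assms(3) assms(4)[of k l] by (auto simp: min_def max_def)
  qed
  also have "\<dots> = g k l"
  proof -
    have "(min k l, max k l) \<in> pairs n" using assms(1-3) by (auto simp: pairs_def min_def max_def)
    then show ?thesis by (simp add: finite_pairs)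
  qed
  finally show ?thesis .
qed

lemma sum_pairs_incident:
  assumes "k < n" "\<And>i j. g i j = g j i"
  shows "(\<Sum>(i, j)\<in>pairs n. g i j * (of_bool (i = k) + of_bool (j = k)))
    = (\<Sum>j\<in>{j. j < n \<and> j \<noteq> k}. g k j :: real)"
proof -
  have "(\<Sum>(i, j)\<in>pairs n. g i j * (of_bool (i = k) + of_bool (j = k)))
     = (\<Sum>i<n. \<Sum>j\<in>{i<..<n}. if i = k then g k j else 0)
       + (\<Sum>i<n. \<Sum>j\<in>{i<..<n}. if j = k then g k i else 0)"
    unfolding sum_pairs distrib_left sum.distrib using assms(2)
    by (intro arg_cong2[where f = "(+)"] sum.cong) auto
  also have "\<dots> = (\<Sum>j\<in>{k<..<n}. g k j) + (\<Sum>i<k. g k i)"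
  proof -
    have "(\<Sum>i<n. \<Sum>j\<in>{i<..<n}. if j = k then g k i else 0) = (\<Sum>i<n. if i < k then g k i else 0)"
      using assms(1) by (intro sum.cong) auto
    also have "\<dots> = (\<Sum>i\<in>{i\<in>{..<n}. i < k}. g k i)"
      by (rule sum.inter_filter[symmetric]) simp
    also have "{i\<in>{..<n}. i < k} = {..<k}" using assms(1) by auto
    finally have "(\<Sum>i<n. \<Sum>j\<in>{i<..<n}. if j = k then g k i else 0) = (\<Sum>i<k. g k i)" .
    moreover have "(\<Sum>i<n. \<Sum>j\<in>{i<..<n}. if i = k then g k j else 0)
        = (\<Sum>i<n. if i = k then (\<Sum>j\<in>{k<..<n}. g k j) else 0)"
      by (intro sum.cong) auto
    ultimately show ?thesis using assms(1) by simp
  qed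
  also have "\<dots> = (\<Sum>j\<in>{j. j < n \<and> j \<noteq> k}. g k j)"
  proof -
    have split: "{j. j < n \<and> j \<noteq> k} = {k<..<n} \<union> {..<k}" using assms(1) by auto
    show ?thesis unfolding split by (subst sum.union_disjoint) auto
  qed
  finally show ?thesis .
qed

section \<open>Second partial derivatives on the equator\<close>

definition on_equator :: "nat \<Rightarrow> (nat \<Rightarrow> real) \<Rightarrow> bool" where
  "on_equator n x \<longleftrightarrow> (\<forall>l<n. x l = pi/2)"

definition pair_cos_hess_equator :: "nat \<Rightarrow> (nat \<Rightarrow> real) \<Rightarrow> nat \<Rightarrow> nat \<Rightarrow> nat \<Rightarrow> nat \<Rightarrow> real" where
  "pair_cos_hess_equator n x i j k b =
       of_bool (i = k) * (- pair_cos n x i j * of_bool (i = b) + of_bool (j = b))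
     + of_bool (j = k) * (of_bool (i = b) - pair_cos n x i j * of_bool (j = b))
     + of_bool (n + i = k) * (- pair_cos n x i j * of_bool (n + i = b) + pair_cos n x i j * of_bool (n + j = b))
     + of_bool (n + j = k) * (pair_cos n x i j * of_bool (n + i = b) - pair_cos n x i j * of_bool (n + j = b))"

lemma DERIV_pair_cos_grad_equator:
  assumes "i < n" "j < n" "on_equator n x"
  shows "((\<lambda>t. pair_cos_grad n (x(b := t)) i j k) has_real_derivative pair_cos_hess_equator n x i j k b) (at (x b))"
proof -
  have eq: "(x(b := x b)) i = pi/2" "(x(b := x b)) j = pi/2" using assms by (auto simp: on_equator_def)
  note D = DERIV_fun_upd[where y = x and k = b and t = "x b"]
  note da = DERIV_sphcos_da_equator[OF D D D D eq] and db = DERIV_sphcos_db_equator[OF D D D D eq]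
    and dp = DERIV_sphcos_dp_equator[OF D D D D eq] and dq = DERIV_sphcos_dq_equator[OF D D D D eq]
  show ?thesis unfolding pair_cos_grad_def pair_cos_hess_equator_def
    by (rule DERIV_cong[OF DERIV_add[OF DERIV_add[OF DERIV_add[OF
        DERIV_cmult_right[OF da] DERIV_cmult_right[OF db]] DERIV_cmult_right[OF dp]] DERIV_cmult_right[OF dq]]])
       (simp add: pair_cos_def algebra_simps)
qed

definition hess_term :: "nat \<Rightarrow> (nat \<Rightarrow> real) \<Rightarrow> (nat \<Rightarrow> real) \<Rightarrow> nat \<Rightarrow> nat \<Rightarrow> nat \<Rightarrow> nat \<Rightarrow> real" where
  "hess_term n m x i j k b = m i * m j *
     (cotarc'' (pair_cos n x i j) * pair_cos_grad n x i j b * pair_cos_grad n x i j k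
      + pair_cos_hess_equator n x i j k b * cotarc' (pair_cos n x i j))"

lemma DERIV_partial_Vpot_equator:
  assumes eq: "on_equator n x" and W: "in_W_cos n x"
  shows "((\<lambda>t. partial (Vpot n m) k (x(b := t))) has_real_derivative
     (\<Sum>(i, j)\<in>pairs n. hess_term n m x i j k b)) (at (x b))"
proof -
  let ?f = "\<lambda>t. \<Sum>(i, j)\<in>pairs n.
    m i * m j * (cotarc' (pair_cos n (x(b := t)) i j) * pair_cos_grad n (x(b := t)) i j k)"
  have "((\<lambda>t. case p of (i, j) \<Rightarrow>
        m i * m j * (cotarc' (pair_cos n (x(b := t)) i j) * pair_cos_grad n (x(b := t)) i j k))
      has_real_derivative (case p of (i, j) \<Rightarrow> hess_term n m x i j k b)) (at (x b))"
    if "p \<in> pairs n" for p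
  proof -
    obtain i j where p: "p = (i, j)" by (cases p)
    with that W have c: "\<bar>pair_cos n x i j\<bar> < 1" and ij: "i < n" "j < n"
      by (auto simp: in_W_cos_def pairs_def)
    have "(cotarc' has_real_derivative cotarc'' (pair_cos n x i j)) (at (pair_cos n (x(b := x b)) i j))"
      using DERIV_cotarc'[OF c] by simp
    note DERIV_mult[OF DERIV_chain2[OF this DERIV_pair_cos[where t = "x b"]]
        DERIV_pair_cos_grad_equator[OF ij eq, of b k]]
    from DERIV_cmult[OF this, of "m i * m j"] show ?thesis
      unfolding p by (simp add: hess_term_def algebra_simps)
  qed
  then have "(?f has_real_derivative (\<Sum>(i, j)\<in>pairs n. hess_term n m x i j k b)) (at (x b))"
    by (rule DERIV_sum)
  moreover have "eventually (\<lambda>t. partial (Vpot n m) k (x(b := t)) = ?f t) (nhds (x b))"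
    using eventually_in_W_cos_upd[OF W] by eventually_elim (rule partial_Vpot)
  ultimately show ?thesis by (simp add: DERIV_cong_ev)
qed

lemma pair_cos_equator:
  assumes "i < n" "j < n" "on_equator n x"
  shows "pair_cos n x i j = cos (x (n + i) - x (n + j))"
proof -
  have equator: "x i = pi/2" "x j = pi/2" using assms by (auto simp: on_equator_def)
  show ?thesis unfolding pair_cos_def sphcos_def equator by (simp add: cos_diff)
qed

lemma pair_cos_grad_equator:
  assumes "i < n" "j < n" "on_equator n x"
  shows "pair_cos_grad n x i j k = (of_bool (n + j = k) - of_bool (n + i = k)) * sin (x (n + i) - x (n + j))"
proof -
  have equator: "x i = pi/2" "x j = pi/2" using assms by (auto simp: on_equator_def)
  show ?thesis
    unfolding pair_cos_grad_def sphcos_da_def sphcos_db_def sphcos_dp_def sphcos_dq_def equator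
    by (simp add: sin_diff algebra_simps)
qed

definition equator_hessian :: "nat \<Rightarrow> (nat \<Rightarrow> real) \<Rightarrow> (nat \<Rightarrow> real) \<Rightarrow> nat \<Rightarrow> nat \<Rightarrow> real" where
  "equator_hessian n m x k b =
    (if k < n \<and> b < n then
       (if k = b then - (\<Sum>j\<in>{j. j < n \<and> j \<noteq> k}. m k * m j * cotarc' (pair_cos n x k j) * pair_cos n x k j)
        else m k * m b * cotarc' (pair_cos n x k b))
     else if n \<le> k \<and> k < 2*n \<and> n \<le> b \<and> b < 2*n then
       (if k = b then
          (\<Sum>j\<in>{j. j < n \<and> j \<noteq> k - n}.
             2 * m (k - n) * m j * pair_cos n x (k - n) j * cotarc' (pair_cos n x (k - n) j))
        else - (2 * m (k - n) * m (b - n) * pair_cos n x (k - n) (b - n)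
                  * cotarc' (pair_cos n x (k - n) (b - n))))
     else 0)"

lemma equator_hessian_commute: "equator_hessian n m x k b = equator_hessian n m x b k"
  unfolding equator_hessian_def by (auto simp: pair_cos_commute mult.commute mult.left_commute)

lemma hess_term_theta:
  assumes "on_equator n x" "i < j" "j < n" "k < n"
  shows "hess_term n m x i j k b = m i * m j * cotarc' (pair_cos n x i j) *
    (if k = b then - pair_cos n x i j * (of_bool (i = k) + of_bool (j = k))
     else of_bool (i = k) * of_bool (j = b) + of_bool (j = k) * of_bool (i = b))"
proof -
  have "pair_cos_grad n x i j k = 0"
    using assms by (simp add: pair_cos_grad_equator)
  moreover have "pair_cos_hess_equator n x i j k b =
    (if k = b then - pair_cos n x i j * (of_bool (i = k) + of_bool (j = k))
     else of_bool (i = k) * of_bool (j = b) + of_bool (j = k) * of_bool (i = b))"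
    using assms by (auto simp: pair_cos_hess_equator_def)
  ultimately show ?thesis by (simp add: hess_term_def)
qed

lemma hess_term_phi:
  assumes "on_equator n x" "in_W_cos n x" "i < j" "j < n"
  shows "hess_term n m x i j (n + \<kappa>) b = 2 * m i * m j * pair_cos n x i j * cotarc' (pair_cos n x i j) *
    ((of_bool (n + i = b) - of_bool (n + j = b)) * (of_bool (i = \<kappa>) - of_bool (j = \<kappa>)))"
proof -
  define c where "c = pair_cos n x i j"
  define w :: real where "w = (of_bool (n + i = b) - of_bool (n + j = b)) * (of_bool (i = \<kappa>) - of_bool (j = \<kappa>))"
  have ij: "i < n" "j < n" using assms by auto
  have "\<bar>c\<bar> < 1" using assms by (auto simp: c_def in_W_cos_def pairs_def)
  define s where "s = sin (x (n + i) - x (n + j))"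
  have "pair_cos_grad n x i j b * pair_cos_grad n x i j (n + \<kappa>) = s\<^sup>2 * w"
    unfolding pair_cos_grad_equator[OF ij assms(1)] w_def s_def[symmetric]
    by (simp add: power2_eq_square algebra_simps split del: split_of_bool)
  also have "s\<^sup>2 = 1 - c\<^sup>2"
    using pair_cos_equator[OF ij assms(1)] by (simp add: c_def s_def sin_squared_eq)
  finally have "cotarc'' c * pair_cos_grad n x i j b * pair_cos_grad n x i j (n + \<kappa>) = 3 * c * cotarc' c * w"
    using cotarc''_mult_one_minus_square[OF \<open>\<bar>c\<bar> < 1\<close>] by (simp add: mult.assoc)
  moreover have "pair_cos_hess_equator n x i j (n + \<kappa>) b = - c * w"
    using ij by (simp add: pair_cos_hess_equator_def c_def w_def algebra_simps)
  ultimately show ?thesis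
    unfolding hess_term_def c_def[symmetric] w_def[symmetric] by (simp add: algebra_simps)
qed

lemma sum_hess_term_theta:
  assumes eq: "on_equator n x" and k: "k < n"
  shows "(\<Sum>(i, j)\<in>pairs n. hess_term n m x i j k b) = equator_hessian n m x k b"
proof -
  let ?g = "\<lambda>i j. m i * m j * cotarc' (pair_cos n x i j)"
  have terms: "(\<Sum>(i, j)\<in>pairs n. hess_term n m x i j k b) = (\<Sum>(i, j)\<in>pairs n. ?g i j *
      (if k = b then - pair_cos n x i j * (of_bool (i = k) + of_bool (j = k))
       else of_bool (i = k) * of_bool (j = b) + of_bool (j = k) * of_bool (i = b)))"
    using eq k by (intro sum.cong) (auto simp: pairs_def hess_term_theta)
  consider "b < n" "k = b" | "b < n" "k \<noteq> b" | "\<not> b < n" by blast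
  then show ?thesis
  proof cases
    case 1
    have "(\<Sum>(i, j)\<in>pairs n. hess_term n m x i j k b)
        = (\<Sum>(i, j)\<in>pairs n. - (?g i j * pair_cos n x i j) * (of_bool (i = k) + of_bool (j = k)))"
      unfolding terms using 1 by (simp add: algebra_simps)
    also have "\<dots> = (\<Sum>j\<in>{j. j < n \<and> j \<noteq> k}. - (?g k j * pair_cos n x k j))"
      by (rule sum_pairs_incident[OF k]) (simp add: pair_cos_commute mult.commute)
    finally show ?thesis using 1 k by (simp add: equator_hessian_def sum_negf)
  next
    case 2
    have "(\<Sum>(i, j)\<in>pairs n. hess_term n m x i j k b)
        = (\<Sum>(i, j)\<in>pairs n. ?g i j * (of_bool (i = k) * of_bool (j = b) + of_bool (j = k) * of_bool (i = b)))"
      unfolding terms using 2 by simp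
    also have "\<dots> = ?g k b"
      by (rule sum_pairs_select[OF k 2]) (simp add: pair_cos_commute mult.commute)
    finally show ?thesis using 2 k by (simp add: equator_hessian_def)
  next
    case 3
    then have "(\<Sum>(i, j)\<in>pairs n. hess_term n m x i j k b) = 0"
      unfolding terms using k by (intro sum.neutral) (auto simp: pairs_def)
    then show ?thesis using 3 k by (simp add: equator_hessian_def)
  qed
qed

lemma sum_hess_term_phi:
  assumes eq: "on_equator n x" and W: "in_W_cos n x" and \<kappa>: "\<kappa> < n"
  shows "(\<Sum>(i, j)\<in>pairs n. hess_term n m x i j (n + \<kappa>) b) = equator_hessian n m x (n + \<kappa>) b"
proof -
  let ?g = "\<lambda>i j. 2 * m i * m j * pair_cos n x i j * cotarc' (pair_cos n x i j)"
  have g_commute: "?g i j = ?g j i" for i j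
    by (simp add: pair_cos_commute mult.commute mult.left_commute)
  have terms: "(\<Sum>(i, j)\<in>pairs n. hess_term n m x i j (n + \<kappa>) b) = (\<Sum>(i, j)\<in>pairs n. ?g i j *
      ((of_bool (n + i = b) - of_bool (n + j = b)) * (of_bool (i = \<kappa>) - of_bool (j = \<kappa>))))"
    using eq W by (intro sum.cong) (auto simp: pairs_def hess_term_phi)
  consider "b = n + \<kappa>" | \<beta> where "b = n + \<beta>" "\<beta> < n" "\<beta> \<noteq> \<kappa>" | "\<not> (n \<le> b \<and> b < 2*n)"
    by (metis add_diff_inverse_nat add_less_cancel_left mult_2 not_less)
  then show ?thesis
  proof cases
    case 1
    have "(\<Sum>(i, j)\<in>pairs n. hess_term n m x i j (n + \<kappa>) b)
        = (\<Sum>(i, j)\<in>pairs n. ?g i j * (of_bool (i = \<kappa>) + of_bool (j = \<kappa>)))"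
      unfolding terms by (intro sum.cong) (auto simp: pairs_def 1)
    also have "\<dots> = (\<Sum>j\<in>{j. j < n \<and> j \<noteq> \<kappa>}. ?g \<kappa> j)"
      by (rule sum_pairs_incident[OF \<kappa> g_commute])
    finally show ?thesis using 1 \<kappa> by (simp add: equator_hessian_def)
  next
    case (2 \<beta>)
    have "(\<Sum>(i, j)\<in>pairs n. hess_term n m x i j (n + \<kappa>) b)
        = (\<Sum>(i, j)\<in>pairs n. - ?g i j * (of_bool (i = \<kappa>) * of_bool (j = \<beta>) + of_bool (j = \<kappa>) * of_bool (i = \<beta>)))"
      unfolding terms by (intro sum.cong) (use 2 in \<open>auto simp: pairs_def\<close>)
    also have "\<dots> = - ?g \<kappa> \<beta>"
      using 2 by (intro sum_pairs_select[OF \<kappa>]) (auto simp: g_commute)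
    finally show ?thesis using 2 \<kappa> by (simp add: equator_hessian_def)
  next
    case 3
    then have "(\<Sum>(i, j)\<in>pairs n. hess_term n m x i j (n + \<kappa>) b) = 0"
      unfolding terms by (intro sum.neutral) (auto simp: pairs_def)
    then show ?thesis using 3 \<kappa> by (auto simp: equator_hessian_def)
  qed
qed

lemma sum_hess_term:
  assumes "on_equator n x" "in_W_cos n x" "k < 2*n"
  shows "(\<Sum>(i, j)\<in>pairs n. hess_term n m x i j k b) = equator_hessian n m x k b"
proof (cases "k < n")
  case True
  then show ?thesis using sum_hess_term_theta[OF assms(1)] by blast
next
  case False
  then obtain \<kappa> where "k = n + \<kappa>" "\<kappa> < n"
    using assms(3) by (metis add_diff_inverse_nat add_less_cancel_left mult_2)
  then show ?thesis using sum_hess_term_phi[OF assms(1,2)] by blast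
qed

lemma on_equator_config: "on_equator n (config n ph)"
  by (simp add: on_equator_def config_def)

lemma on_equator_Xomega: "on_equator n (Xomega n m ph \<omega>)"
  by (simp add: on_equator_def Xomega_def)

lemma pair_cos_Xomega:
  "i < n \<Longrightarrow> j < n \<Longrightarrow> pair_cos n (Xomega n m ph \<omega>) i j = pair_cos n (config n ph) i j"
  by (simp add: pair_cos_def Xomega_def config_def)

lemma in_W_cos_Xomega: "in_W_cos n (config n ph) \<Longrightarrow> in_W_cos n (Xomega n m ph \<omega>)"
  by (auto simp: in_W_cos_def pairs_def pair_cos_Xomega)

lemma equator_hessian_Xomega:
  "equator_hessian n m (Xomega n m ph \<omega>) k b = equator_hessian n m (config n ph) k b"
  unfolding equator_hessian_def by (auto simp: pair_cos_Xomega intro!: sum.cong)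

lemma second_partial_Vpot_config:
  assumes "in_W n (config n ph)" "k < 2*n"
  shows "partial (partial (Vpot n m) k) b (config n ph) = equator_hessian n m (config n ph) k b"
  unfolding partial_def[of "partial (Vpot n m) k"]
  using DERIV_imp_deriv[OF DERIV_partial_Vpot_equator[OF on_equator_config in_W_imp_in_W_cos[OF assms(1)]]]
  by (simp add: sum_hess_term[OF on_equator_config in_W_imp_in_W_cos[OF assms(1)] assms(2)])

lemma Hmat_eq_equator_hessian:
  assumes "in_W n (config n ph)" "i < n" "j < n"
  shows "Hmat n m ph i j = equator_hessian n m (config n ph) i j"
  using assms by (simp add: Hmat_def second_partial_Vpot_config equator_hessian_commute)

lemma Gmat_eq_equator_hessian:
  assumes "in_W n (config n ph)" "i < n" "j < n"
  shows "Gmat n m ph i j = equator_hessian n m (config n ph) (n + i) (n + j)"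
  using assms by (simp add: Gmat_def second_partial_Vpot_config equator_hessian_commute)

lemma cotarc'_pair_cos: "cotarc' (pair_cos n x i j) = 1 / sin (sdist n x i j) ^ 3"
  unfolding cotarc'_def sin_cos_sdist ..

lemma Hmat_offdiag:
  assumes "in_W n (config n ph)" "i < n" "j < n" "i \<noteq> j"
  shows "Hmat n m ph i j = m i * m j / sin (sdist n (config n ph) i j) ^ 3"
  using assms by (simp add: Hmat_eq_equator_hessian equator_hessian_def cotarc'_pair_cos)

lemma Gmat_offdiag:
  assumes "in_W n (config n ph)" "i < n" "j < n" "i \<noteq> j"
  shows "Gmat n m ph i j = - 2 * m i * m j * cos (sdist n (config n ph) i j) / sin (sdist n (config n ph) i j) ^ 3"
  using assms by (simp add: Gmat_eq_equator_hessian equator_hessian_def cotarc'_pair_cos sin_cos_sdist(2))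

lemma Hmat_diag:
  assumes "in_W n (config n ph)" "i < n"
  shows "Hmat n m ph i i = - (\<Sum>j\<in>{j. j < n \<and> j \<noteq> i}. Hmat n m ph i j * cos (sdist n (config n ph) i j))"
  using assms
  by (auto simp: Hmat_eq_equator_hessian equator_hessian_def cotarc'_pair_cos sin_cos_sdist(2)
      intro!: sum.cong)

lemma Gmat_diag:
  assumes "in_W n (config n ph)" "i < n"
  shows "Gmat n m ph i i = - (\<Sum>j\<in>{j. j < n \<and> j \<noteq> i}. Gmat n m ph i j)"
  using assms
  by (auto simp: Gmat_eq_equator_hessian equator_hessian_def sum_negf[symmetric] intro!: sum.cong)

section \<open>The Jacobian of the rotating vector field\<close>

lemma DERIV_neg_partial_Upot_Xomega:
  assumes "in_W n (config n ph)" "k < 2*n"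
  shows "((\<lambda>t. - partial (Upot n m) k ((Xomega n m ph \<omega>)(b := t))) has_real_derivative
    equator_hessian n m (config n ph) k b) (at (Xomega n m ph \<omega> b))"
proof -
  let ?X = "Xomega n m ph \<omega>"
  have W: "in_W_cos n ?X" using in_W_cos_Xomega[OF in_W_imp_in_W_cos[OF assms(1)]] .
  have "eventually (\<lambda>t. - partial (Upot n m) k (?X(b := t)) = partial (Vpot n m) k (?X(b := t))) (nhds (?X b))"
    using eventually_in_W_cos_upd[OF W] by eventually_elim (simp add: partial_Upot)
  moreover note DERIV_partial_Vpot_equator[OF on_equator_Xomega W, of m k b]
  ultimately show ?thesis
    by (simp add: DERIV_cong_ev sum_hess_term[OF on_equator_Xomega W assms(2)] equator_hessian_Xomega)
qed

lemma DERIV_rot_field_theta_row: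
  assumes "a < n"
  shows "((\<lambda>t. rot_field n m \<omega> ((Xomega n m ph \<omega>)(b := t)) a) has_real_derivative
    Lblock n m ph \<omega> a b) (at (Xomega n m ph \<omega> b))"
proof -
  have "(\<lambda>t. rot_field n m \<omega> ((Xomega n m ph \<omega>)(b := t)) a)
      = (\<lambda>t. ((Xomega n m ph \<omega>)(b := t)) (2*n + a) / m a)"
    using assms by (simp add: rot_field_def)
  moreover have "Lblock n m ph \<omega> a b = of_bool (2*n + a = b) / m a"
    using assms by (auto simp: Lblock_def)
  ultimately show ?thesis by (simp add: DERIV_cdivide DERIV_fun_upd)
qed

lemma DERIV_rot_field_phi_row:
  assumes "n \<le> a" "a < 2*n" "\<And>i. i < n \<Longrightarrow> m i > 0"
  shows "((\<lambda>t. rot_field n m \<omega> ((Xomega n m ph \<omega>)(b := t)) a) has_real_derivative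
    Lblock n m ph \<omega> a b) (at (Xomega n m ph \<omega> b))"
proof -
  let ?X = "Xomega n m ph \<omega>"
  define i where "i = a - n"
  have i: "a = n + i" "i < n" "m i > 0" using assms by (auto simp: i_def)
  have rot: "(\<lambda>t. rot_field n m \<omega> (?X(b := t)) a)
      = (\<lambda>t. (?X(b := t)) (3*n + i) / (m i * sin ((?X(b := t)) i) ^ 2) - \<omega>)"
    using i by (simp add: rot_field_def)
  have L: "Lblock n m ph \<omega> a b = of_bool (3*n + i = b) / m i" using i by (auto simp: Lblock_def)
  show ?thesis
  proof (cases "b = i")
    case True
    have f: "(\<lambda>t. (?X(b := t)) (3*n + i) / (m i * sin ((?X(b := t)) i) ^ 2) - \<omega>)
        = (\<lambda>t. \<omega> * m i / (m i * sin t ^ 2) - \<omega>)"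
      using True i by (simp add: Xomega_def)
    have "((\<lambda>t. \<omega> * m i / (m i * sin t ^ 2) - \<omega>) has_real_derivative 0) (at (pi/2))"
      using i by (auto intro!: derivative_eq_intros)
    moreover have X: "?X b = pi/2" and "3*n + i \<noteq> b" using True i by (auto simp: Xomega_def)
    ultimately show ?thesis unfolding rot L f X by simp
  next
    case False
    have "(\<lambda>t. (?X(b := t)) (3*n + i) / (m i * sin ((?X(b := t)) i) ^ 2) - \<omega>)
        = (\<lambda>t. (?X(b := t)) (3*n + i) / m i - \<omega>)"
      using False i by (simp add: Xomega_def)
    moreover have "((\<lambda>t. (?X(b := t)) (3*n + i) / m i - \<omega>) has_real_derivative
        of_bool (3*n + i = b) / m i) (at (?X b))"
      using DERIV_diff[OF DERIV_cdivide[OF DERIV_fun_upd[where y = ?X and t = "?X b"]] DERIV_const]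
      by simp
    ultimately show ?thesis unfolding rot L by simp
  qed
qed

lemma DERIV_centrifugal_Xomega:
  assumes "i < n" "m i > 0"
  shows "((\<lambda>t. ((Xomega n m ph \<omega>)(b := t)) (3*n + i) ^ 2 * cos (((Xomega n m ph \<omega>)(b := t)) i)
        / (m i * sin (((Xomega n m ph \<omega>)(b := t)) i) ^ 3))
     has_real_derivative (if b = i then - (\<omega>\<^sup>2 * m i) else 0)) (at (Xomega n m ph \<omega> b))"
proof (cases "b = i")
  case True
  have "((\<lambda>t. (\<omega> * m i)\<^sup>2 * cos t / (m i * sin t ^ 3)) has_real_derivative - (\<omega>\<^sup>2 * m i)) (at (pi/2))"
    using assms by (auto intro!: derivative_eq_intros simp: power2_eq_square field_simps)
  then show ?thesis using True assms by (simp add: Xomega_def)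
next
  case False
  then show ?thesis using assms by (simp add: Xomega_def)
qed

lemma DERIV_rot_field_ptheta_row:
  assumes "2*n \<le> a" "a < 3*n" "\<And>i. i < n \<Longrightarrow> m i > 0" "in_W n (config n ph)"
  shows "((\<lambda>t. rot_field n m \<omega> ((Xomega n m ph \<omega>)(b := t)) a) has_real_derivative
    Lblock n m ph \<omega> a b) (at (Xomega n m ph \<omega> b))"
proof -
  let ?X = "Xomega n m ph \<omega>"
  define i where "i = a - 2*n"
  have i: "a = 2*n + i" "i < n" "m i > 0" using assms by (auto simp: i_def)
  have "(\<lambda>t. rot_field n m \<omega> (?X(b := t)) a)
      = (\<lambda>t. (?X(b := t)) (3*n + i) ^ 2 * cos ((?X(b := t)) i) / (m i * sin ((?X(b := t)) i) ^ 3)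
             + - partial (Upot n m) i (?X(b := t)))"
    using i by (simp add: rot_field_def)
  moreover have "Lblock n m ph \<omega> a b
      = (if b = i then - (\<omega>\<^sup>2 * m i) else 0) + equator_hessian n m (config n ph) i b"
    using i assms(4) by (auto simp: Lblock_def Hmat_eq_equator_hessian equator_hessian_def)
  ultimately show ?thesis
    using DERIV_add[OF DERIV_centrifugal_Xomega[of i n m ph \<omega> b, OF i(2,3)] DERIV_neg_partial_Upot_Xomega[OF assms(4)]] i
    by simp
qed

lemma DERIV_rot_field_pphi_row:
  assumes "3*n \<le> a" "a < 4*n" "in_W n (config n ph)"
  shows "((\<lambda>t. rot_field n m \<omega> ((Xomega n m ph \<omega>)(b := t)) a) has_real_derivative
    Lblock n m ph \<omega> a b) (at (Xomega n m ph \<omega> b))"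
proof -
  define i where "i = a - 3*n"
  have i: "a = 3*n + i" "i < n" using assms by (auto simp: i_def)
  have "Lblock n m ph \<omega> a b = equator_hessian n m (config n ph) (n + i) b"
  proof (cases "n \<le> b \<and> b < 2*n")
    case True
    then have "n + (b - n) = b" by simp
    with True show ?thesis using i assms(3) by (simp add: Lblock_def Gmat_eq_equator_hessian)
  next
    case False
    then show ?thesis using i by (auto simp: Lblock_def equator_hessian_def)
  qed
  then show ?thesis
    using DERIV_neg_partial_Upot_Xomega[OF assms(3), of "n + i"] i by (simp add: rot_field_def)
qed

lemma DERIV_rot_field_Xomega:
  assumes "\<forall>i<n. m i > 0" "in_W n (config n ph)" "a < 4*n"
  shows "((\<lambda>t. rot_field n m \<omega> ((Xomega n m ph \<omega>)(b := t)) a) has_real_derivative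
    Lblock n m ph \<omega> a b) (at (Xomega n m ph \<omega> b))"
proof -
  consider "a < n" | "n \<le> a" "a < 2*n" | "2*n \<le> a" "a < 3*n" | "3*n \<le> a" by linarith
  then show ?thesis
    by cases (use assms in \<open>auto intro: DERIV_rot_field_theta_row DERIV_rot_field_phi_row
        DERIV_rot_field_ptheta_row DERIV_rot_field_pphi_row\<close>)
qed

theorem lemma1:
  fixes n :: nat and m phi0 :: "nat \<Rightarrow> real" and \<omega> :: real
  assumes "n \<ge> 3"
    and "\<And>i. i < n \<Longrightarrow> m i > 0"
    and "fixed_point n m (config n phi0)"
  shows "(\<forall>a<4*n. \<forall>b<4*n.
            ((\<lambda>t. rot_field n m \<omega> ((Xomega n m phi0 \<omega>)(b := t)) a)
               has_real_derivative Lblock n m phi0 \<omega> a b) (at (Xomega n m phi0 \<omega> b)))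
       \<and> (\<forall>i<n. \<forall>j<n. i \<noteq> j \<longrightarrow>
            Hmat n m phi0 i j = m i * m j / sin (sdist n (config n phi0) i j) ^ 3
          \<and> Gmat n m phi0 i j = - 2 * m i * m j * cos (sdist n (config n phi0) i j)
                                  / sin (sdist n (config n phi0) i j) ^ 3)
       \<and> (\<forall>i<n. Hmat n m phi0 i i =
              - (\<Sum>j\<in>{j. j < n \<and> j \<noteq> i}. Hmat n m phi0 i j * cos (sdist n (config n phi0) i j))
          \<and> Gmat n m phi0 i i = - (\<Sum>j\<in>{j. j < n \<and> j \<noteq> i}. Gmat n m phi0 i j))"
proof -
  have W: "in_W n (config n phi0)" using assms(3) by (simp add: fixed_point_def)
  have pos: "\<forall>i<n. m i > 0" using assms(2) by blast
  show ?thesis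
    by (intro conjI allI impI DERIV_rot_field_Xomega[OF pos W] Hmat_offdiag Gmat_offdiag
        Hmat_diag Gmat_diag W)
qed

end
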